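(* Let $\mu,\sigma$ be non-uniformly stable matchings in $G$ and let $F=(\mu\setminus\sigma)\cup(\sigma\setminus\mu)$. Let $(v_1,\dots,v_{k+1})$ be a cycle in $F$ (i.e., $v_1,\dots,v_k$ distinct, $v_{k+1}=v_1$, and $e_\ell:=\{v_\ell,v_{\ell+1}\}\in F$ for all $\ell\in[k]$), and set $e_0:=e_k$. Then one of the following holds: (C1) $e_\ell\succ_{v_\ell}e_{\ell-1}$ for every $\ell\in[k]$; (C2) $e_{\ell-1}\succ_{v_\ell}e_\ell$ for every $\ell\in[k]$; (C3) $e_\ell\sim_{v_\ell}e_{\ell-1}$ for every $\ell\in[k]$.
   Context: Setting: $G=(V,E)$ is a finite simple bipartite graph with $V=V_1\sqcup V_2$, every edge joining a vertex of $V_1$ to a vertex of $V_2$; an edge is identified with the set of its two endpoints. $E$ is partitioned into $E_1,E_2$. For $F\subseteq E$ and $v\in V$, $F(v)$ is the set of edges of $F$ incident to $v$. For every $v\in V$ there is a transitive and complete binary relation $\succsim_v$ on $E(v)\cup\{\emptyset\}$ with $e\succsim_v\emptyset$ and $\emptyset\not\succsim_v e$ for all $e\in E(v)$; $e\succ_v f$ means $e\succsim_v f$ and $f\not\succsim_v e$; $e\sim_v f$ means both $e\succsim_v f$ and $f\succsim_v e$. A matching is $\mu\subseteq E$ with $|\mu(v)|\le1$ for all $v$; $\mu(v)$ denotes the edge of $\mu$ at $v$, or $\emptyset$. An edge $e\in E\setminus\mu$ weakly blocks $\mu$ if $e\succsim_v\mu(v)$ for every $v\in e$; it strongly blocks $\mu$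 if additionally $e\succ_w\mu(w)$ for some $w\in e$. $\mu$ is non-uniformly stable if no edge of $E_1\setminus\mu$ weakly blocks $\mu$ and no edge of $E_2\setminus\mu$ strongly blocks $\mu$. $[k]=\{1,\dots,k\}$. *)

theory Defs
  imports Main
begin

text \<open>Edges are 2-element vertex sets; the empty set {} plays the role of the
  "unmatched" outcome written \<emptyset> in the paper. A preference profile is
  pref :: vertex => (vertex set) => (vertex set) => bool, where pref v e f means e \<succeq>_v f.\<close>

definition edges_at :: "'v set set \<Rightarrow> 'v \<Rightarrow> 'v set set" where
  "edges_at F v = {e \<in> F. v \<in> e}"

definition setting ::
  "'v set \<Rightarrow> 'v set \<Rightarrow> 'v set set \<Rightarrow> 'v set set \<Rightarrow> 'v set set
   \<Rightarrow> ('v \<Rightarrow> 'v set \<Rightarrow> 'v set \<Rightarrow> bool) \<Rightarrow> bool" where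
  "setting V1 V2 E E1 E2 pref \<longleftrightarrow>
     finite (V1 \<union> V2) \<and> V1 \<inter> V2 = {} \<and>
     E \<subseteq> {{a, b} | a b. a \<in> V1 \<and> b \<in> V2} \<and>
     E1 \<union> E2 = E \<and> E1 \<inter> E2 = {} \<and>
     (\<forall>v \<in> V1 \<union> V2.
        (\<forall>e \<in> edges_at E v \<union> {{}}. \<forall>f \<in> edges_at E v \<union> {{}}. pref v e f \<or> pref v f e) \<and>
        (\<forall>e \<in> edges_at E v \<union> {{}}. \<forall>f \<in> edges_at E v \<union> {{}}. \<forall>g \<in> edges_at E v \<union> {{}}.
            pref v e f \<longrightarrow> pref v f g \<longrightarrow> pref v e g) \<and>
        (\<forall>e \<in> edges_at E v. pref v e {} \<and> \<not> pref v {} e))"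

definition strict_pref :: "('v \<Rightarrow> 'v set \<Rightarrow> 'v set \<Rightarrow> bool) \<Rightarrow> 'v \<Rightarrow> 'v set \<Rightarrow> 'v set \<Rightarrow> bool" where
  "strict_pref pref v e f \<longleftrightarrow> pref v e f \<and> \<not> pref v f e"

definition indiff :: "('v \<Rightarrow> 'v set \<Rightarrow> 'v set \<Rightarrow> bool) \<Rightarrow> 'v \<Rightarrow> 'v set \<Rightarrow> 'v set \<Rightarrow> bool" where
  "indiff pref v e f \<longleftrightarrow> pref v e f \<and> pref v f e"

definition matching :: "'v set set \<Rightarrow> 'v set set \<Rightarrow> bool" where
  "matching E \<mu> \<longleftrightarrow> \<mu> \<subseteq> E \<and> (\<forall>v. card (edges_at \<mu> v) \<le> 1)"

definition partner_edge :: "'v set set \<Rightarrow> 'v \<Rightarrow> 'v set" where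
  "partner_edge \<mu> v = (if \<exists>e \<in> \<mu>. v \<in> e then (THE e. e \<in> \<mu> \<and> v \<in> e) else {})"

definition weakly_blocks ::
  "('v \<Rightarrow> 'v set \<Rightarrow> 'v set \<Rightarrow> bool) \<Rightarrow> 'v set set \<Rightarrow> 'v set set \<Rightarrow> 'v set \<Rightarrow> bool" where
  "weakly_blocks pref E \<mu> e \<longleftrightarrow> e \<in> E - \<mu> \<and> (\<forall>v \<in> e. pref v e (partner_edge \<mu> v))"

definition strongly_blocks ::
  "('v \<Rightarrow> 'v set \<Rightarrow> 'v set \<Rightarrow> bool) \<Rightarrow> 'v set set \<Rightarrow> 'v set set \<Rightarrow> 'v set \<Rightarrow> bool" where
  "strongly_blocks pref E \<mu> e \<longleftrightarrow> weakly_blocks pref E \<mu> e \<and>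
     (\<exists>w \<in> e. strict_pref pref w e (partner_edge \<mu> w))"

definition nu_stable ::
  "'v set set \<Rightarrow> 'v set set \<Rightarrow> 'v set set \<Rightarrow> ('v \<Rightarrow> 'v set \<Rightarrow> 'v set \<Rightarrow> bool) \<Rightarrow> 'v set set \<Rightarrow> bool" where
  "nu_stable E E1 E2 pref \<mu> \<longleftrightarrow> matching E \<mu> \<and>
     (\<forall>e \<in> E1 - \<mu>. \<not> weakly_blocks pref E \<mu> e) \<and>
     (\<forall>e \<in> E2 - \<mu>. \<not> strongly_blocks pref E \<mu> e)"

end

theory Submission
  imports Defs
begin

text \<open>If a vertex strictly prefers an edge f of the cycle to its incoming edge, then, since f
  lies in one of the two matchings and both neighbouring cycle edges lie in the other, the
  other endpoint of f must strictly prefer its outgoing edge to f: otherwise f would strongly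
  block that matching. Hence strict preference for the outgoing edge propagates forward
  around the cycle and strict preference for the incoming edge propagates backward; if
  neither holds anywhere, all comparisons are indifferences.\<close>

lemma setting_finite_edges:
  assumes "setting V1 V2 E E1 E2 pref"
  shows "finite E"
proof -
  have "E \<subseteq> (\<lambda>(a, b). {a, b}) ` ((V1 \<union> V2) \<times> (V1 \<union> V2))"
    using assms unfolding setting_def by auto
  moreover have "finite ((V1 \<union> V2) \<times> (V1 \<union> V2))"
    using assms unfolding setting_def by auto
  ultimately show ?thesis
    using finite_surj by blast
qed

lemma setting_edge_vertex:
  assumes "setting V1 V2 E E1 E2 pref" "f \<in> E" "v \<in> f"
  shows "v \<in> V1 \<union> V2"
proof -
  have "E \<subseteq> {{a, b} | a b. a \<in> V1 \<and> b \<in> V2}"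
    using assms(1) unfolding setting_def by blast
  then show ?thesis
    using assms(2,3) by blast
qed

lemma setting_no_loop:
  assumes "setting V1 V2 E E1 E2 pref"
  shows "{v} \<notin> E"
proof -
  have "E \<subseteq> {{a, b} | a b. a \<in> V1 \<and> b \<in> V2}" "V1 \<inter> V2 = {}"
    using assms unfolding setting_def by blast+
  then show ?thesis
    by (auto simp: doubleton_eq_iff)
qed

lemma setting_pref_total:
  assumes "setting V1 V2 E E1 E2 pref" "f \<in> edges_at E v" "g \<in> edges_at E v"
  shows "pref v f g \<or> pref v g f"
proof -
  have "v \<in> V1 \<union> V2"
    using assms(2) setting_edge_vertex[OF assms(1)] unfolding edges_at_def by blast
  moreover have "\<forall>v \<in> V1 \<union> V2. \<forall>f \<in> edges_at E v \<union> {{}}. \<forall>g \<in> edges_at E v \<union> {{}}.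
      pref v f g \<or> pref v g f"
    using assms(1) unfolding setting_def by blast
  ultimately show ?thesis
    using assms(2,3) by blast
qed

lemma matching_edge_unique:
  assumes "matching E s" "finite E" "f \<in> s" "g \<in> s" "v \<in> f" "v \<in> g"
  shows "f = g"
proof -
  have "edges_at s v \<subseteq> E"
    using assms(1) unfolding matching_def edges_at_def by blast
  then have "finite (edges_at s v)"
    using assms(2) finite_subset by blast
  moreover have "card (edges_at s v) \<le> 1"
    using assms(1) unfolding matching_def by blast
  moreover have "f \<in> edges_at s v" "g \<in> edges_at s v"
    using assms unfolding edges_at_def by auto
  ultimately show ?thesis
    using card_le_Suc0_iff_eq by auto
qed

lemma partner_edge_eq:
  assumes "matching E s" "finite E" "f \<in> s" "v \<in> f"
  shows "partner_edge s v = f"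
proof -
  have "(THE g. g \<in> s \<and> v \<in> g) = f"
  proof (rule the_equality)
    fix g
    assume "g \<in> s \<and> v \<in> g"
    then show "g = f"
      using matching_edge_unique[OF assms(1,2)] assms(3,4) by blast
  qed (use assms in simp)
  then show ?thesis
    using assms unfolding partner_edge_def by auto
qed

lemma nu_stable_strict_pref_transfer:
  assumes "setting V1 V2 E E1 E2 pref" "nu_stable E E1 E2 pref s"
    and "{a, b} \<in> E" "{a, b} \<notin> s" "g \<in> s" "a \<in> g" "h \<in> s" "b \<in> h"
    and "strict_pref pref a {a, b} g"
  shows "strict_pref pref b h {a, b}"
proof -
  have match: "matching E s"
    using assms(2) unfolding nu_stable_def by blast
  have fin: "finite E"
    using setting_finite_edges[OF assms(1)] .
  have partners: "partner_edge s a = g" "partner_edge s b = h"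
    using partner_edge_eq[OF match fin] assms(5-8) by auto
  have "\<not> pref b {a, b} h"
  proof
    assume "pref b {a, b} h"
    then have "strongly_blocks pref E s {a, b}"
      using assms(3,4,9) partners
      unfolding strongly_blocks_def weakly_blocks_def strict_pref_def by auto
    moreover have "{a, b} \<in> E1 \<or> {a, b} \<in> E2"
      using assms(1,3) unfolding setting_def by blast
    ultimately show False
      using assms(2,4) unfolding nu_stable_def strongly_blocks_def by blast
  qed
  moreover have "h \<in> edges_at E b" "{a, b} \<in> edges_at E b"
    using assms(3,7,8) match unfolding matching_def edges_at_def by auto
  ultimately show ?thesis
    using setting_pref_total[OF assms(1)] unfolding strict_pref_def by blast
qed

lemma matching_adjacent_edge:
  assumes "matching E \<mu>" "finite E" "f \<in> \<mu>" "g \<in> \<mu> \<union> \<sigma>" "g \<noteq> f"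
    "v \<in> f" "v \<in> g"
  shows "g \<in> \<sigma>"
proof -
  have "g \<notin> \<mu>"
    using matching_edge_unique[OF assms(1-3), of g v] assms(5-7) by blast
  then show ?thesis
    using assms(4) by blast
qed

lemma sym_diff_strict_pref_transfer:
  assumes "setting V1 V2 E E1 E2 pref"
    and "nu_stable E E1 E2 pref \<mu>" "nu_stable E E1 E2 pref \<sigma>"
    and "F = (\<mu> - \<sigma>) \<union> (\<sigma> - \<mu>)"
    and "{t, a} \<in> F" "{a, b} \<in> F" "{b, c} \<in> F" "t \<noteq> b" "a \<noteq> c"
    and "strict_pref pref a {a, b} {t, a}"
  shows "strict_pref pref b {b, c} {a, b}"
proof -
  have fin: "finite E"
    using setting_finite_edges[OF assms(1)] .
  have match: "matching E \<mu>" "matching E \<sigma>"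
    using assms(2,3) unfolding nu_stable_def by blast+
  have FE: "F \<subseteq> E"
    using match assms(4) unfolding matching_def by blast
  have neq: "{t, a} \<noteq> {a, b}" "{b, c} \<noteq> {a, b}"
    using assms(8,9) by (auto simp: doubleton_eq_iff)
  have "{a, b} \<in> \<mu> - \<sigma> \<or> {a, b} \<in> \<sigma> - \<mu>"
    using assms(4,6) by blast
  then show ?thesis
  proof
    assume "{a, b} \<in> \<mu> - \<sigma>"
    moreover from this have "{t, a} \<in> \<sigma>" "{b, c} \<in> \<sigma>"
      using matching_adjacent_edge[OF match(1) fin] assms(4,5,7) neq by blast+
    ultimately show ?thesis
      using nu_stable_strict_pref_transfer[OF assms(1,3)] assms(6,10) FE by blast
  next
    assume "{a, b} \<in> \<sigma> - \<mu>"
    moreover from this have "{t, a} \<in> \<mu>" "{b, c} \<in> \<mu>"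
      using matching_adjacent_edge[OF match(2) fin] assms(4,5,7) neq by blast+
    ultimately show ?thesis
      using nu_stable_strict_pref_transfer[OF assms(1,2)] assms(6,10) FE by blast
  qed
qed

lemma cyclic_all_or_none:
  fixes k :: nat
  assumes succ: "\<And>l. l \<in> {1..k} \<Longrightarrow> P l \<Longrightarrow> P (if l = k then 1 else Suc l)"
  shows "(\<forall>l \<in> {1..k}. P l) \<or> (\<forall>l \<in> {1..k}. \<not> P l)"
proof (rule disjCI)
  assume "\<not> (\<forall>l \<in> {1..k}. \<not> P l)"
  then obtain i where i: "i \<in> {1..k}" "P i"
    by blast
  have up: "P j" if "P i'" "1 \<le> i'" "i' \<le> j" "j \<le> k" for i' j
    using that(3,1,2,4)
  proof (induction j rule: dec_induct)
    case (step n)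
    then show ?case
      using succ[of n] by auto
  qed auto
  have "P 1"
    using succ[of k] up[of i k] i by auto
  then show "\<forall>l \<in> {1..k}. P l"
    using up by auto
qed

lemma cycle_edge_eq:
  assumes "vs (k + 1) = vs 1"
    and "e = (\<lambda>l. if l = 0 then {vs k, vs (k + 1)} else {vs l, vs (l + 1)})"
    and "i \<in> {1..k}"
  shows "e i = {vs i, vs (if i = k then 1 else Suc i)}"
  using assms by auto

lemma cycle_prev_edge:
  assumes "e = (\<lambda>l. if l = 0 then {vs k, vs (k + 1)} else {vs l, vs (l + 1)})"
    and "l \<in> {1..k}"
  obtains p where "p \<in> {1..k}" "e (l - 1) = e p" "(if p = k then 1 else Suc p) = l"
proof (cases "l = 1")
  case True
  then show ?thesis
    using that[of k] assms by auto
next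
  case False
  then have "l - 1 \<in> {1..k}" "l - 1 \<noteq> k" "Suc (l - 1) = l"
    using assms(2) by auto
  then show ?thesis
    using that[of "l - 1"] by auto
qed

lemma cycle_pref_total:
  fixes k :: nat
  assumes "setting V1 V2 E E1 E2 pref"
    and "vs (k + 1) = vs 1" "\<forall>l \<in> {1..k}. {vs l, vs (l + 1)} \<in> E"
    and "e = (\<lambda>l. if l = 0 then {vs k, vs (k + 1)} else {vs l, vs (l + 1)})"
    and "l \<in> {1..k}"
  shows "pref (vs l) (e l) (e (l - 1)) \<or> pref (vs l) (e (l - 1)) (e l)"
proof -
  obtain p :: nat where p: "p \<in> {1..k}" "e (l - 1) = e p" "(if p = k then 1 else Suc p) = l"
    using cycle_prev_edge[OF assms(4,5)] .
  have "e i \<in> E" if "i \<in> {1..k}" for i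
    using assms(3,4) that by auto
  moreover have "vs l \<in> e l" "vs l \<in> e p"
    using cycle_edge_eq[OF assms(2,4)] assms(5) p(1,3) by auto
  ultimately have "e l \<in> edges_at E (vs l)" "e (l - 1) \<in> edges_at E (vs l)"
    using assms(5) p(1,2) unfolding edges_at_def by auto
  then show ?thesis
    using setting_pref_total[OF assms(1)] by blast
qed

lemma short_cycle_indiff:
  fixes k :: nat
  assumes "setting V1 V2 E E1 E2 pref"
    and "vs (k + 1) = vs 1" "\<forall>l \<in> {1..k}. {vs l, vs (l + 1)} \<in> E"
    and "e = (\<lambda>l. if l = 0 then {vs k, vs (k + 1)} else {vs l, vs (l + 1)})"
    and "k \<le> 2"
  shows "\<forall>l \<in> {1..k}. indiff pref (vs l) (e l) (e (l - 1))"
proof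
  fix l
  assume l: "l \<in> {1..k}"
  have "k \<noteq> 1"
  proof
    assume "k = 1"
    then have "{vs 1} \<in> E"
      using assms(2,3) by auto
    then show False
      using setting_no_loop[OF assms(1)] by blast
  qed
  then have "k = 2"
    using assms(5) l by auto
  then have "e 0 = {vs 1, vs 2}" "e 1 = {vs 1, vs 2}" "e 2 = {vs 1, vs 2}"
    using assms(2,4) by (simp_all add: insert_commute numeral_2_eq_2)
  moreover have "l = 1 \<or> l = 2"
    using \<open>k = 2\<close> l by auto
  ultimately have "e l = e (l - 1)"
    by auto
  then show "indiff pref (vs l) (e l) (e (l - 1))"
    using cycle_pref_total[OF assms(1-4) l] unfolding indiff_def by auto
qed

lemma cycle_strict_pref_transfer:
  fixes k :: nat
  assumes "setting V1 V2 E E1 E2 pref"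
    and "nu_stable E E1 E2 pref \<mu>" "nu_stable E E1 E2 pref \<sigma>"
    and "F = (\<mu> - \<sigma>) \<union> (\<sigma> - \<mu>)"
    and "inj_on vs {1..k}" "vs (k + 1) = vs 1"
    and "\<forall>l \<in> {1..k}. {vs l, vs (l + 1)} \<in> F"
    and "e = (\<lambda>l. if l = 0 then {vs k, vs (k + 1)} else {vs l, vs (l + 1)})"
    and "3 \<le> k" "l \<in> {1..k}" "l' = (if l = k then 1 else Suc l)"
  shows "strict_pref pref (vs l) (e l) (e (l - 1)) \<Longrightarrow> strict_pref pref (vs l') (e l') (e (l' - 1))"
    and "strict_pref pref (vs l') (e (l' - 1)) (e l') \<Longrightarrow> strict_pref pref (vs l) (e (l - 1)) (e l)"
proof -
  obtain p :: nat where p: "p \<in> {1..k}" "e (l - 1) = e p" "(if p = k then 1 else Suc p) = l"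
    using cycle_prev_edge[OF assms(8,10)] .
  define l'' where "l'' = (if l' = k then 1 else Suc l')"
  have idx: "l' \<in> {1..k}" "l'' \<in> {1..k}" "p \<noteq> l'" "l'' \<noteq> l"
    using assms(9-11) p unfolding l''_def by (auto split: if_splits)
  note edge = cycle_edge_eq[OF assms(6,8)]
  have "e (l' - 1) = e l"
    using assms(8,11) by auto
  moreover have "e (l - 1) = {vs p, vs l}" "e l = {vs l, vs l'}" "e l' = {vs l', vs l''}"
    using edge[OF p(1)] edge[OF assms(10)] edge[OF idx(1)] p(2,3) assms(11)
    unfolding l''_def by auto
  ultimately have edges: "e (l - 1) = {vs p, vs l}" "e l = {vs l, vs l'}"
    "e (l' - 1) = {vs l, vs l'}" "e l' = {vs l', vs l''}"
    by simp_all
  have "e i \<in> F" if "i \<in> {1..k}" for i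
    using assms(7,8) that by auto
  then have inF: "{vs p, vs l} \<in> F" "{vs l, vs l'} \<in> F" "{vs l', vs l''} \<in> F"
    using edges p(1,2) assms(10) idx(1) by metis+
  have distinct: "vs p \<noteq> vs l'" "vs l \<noteq> vs l''"
    using inj_onD[OF assms(5)] idx p(1) assms(10) by blast+
  note transfer = sym_diff_strict_pref_transfer[OF assms(1-4)]
  show "strict_pref pref (vs l) (e l) (e (l - 1)) \<Longrightarrow> strict_pref pref (vs l') (e l') (e (l' - 1))"
    using transfer[OF inF distinct] edges by simp
  show "strict_pref pref (vs l') (e (l' - 1)) (e l') \<Longrightarrow> strict_pref pref (vs l) (e (l - 1)) (e l)"
    using transfer[of "vs l''" "vs l'" "vs l" "vs p"] inF distinct edges
    by (simp add: insert_commute)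
qed

theorem lemma5p2:
  fixes V1 V2 :: "'v set" and E E1 E2 \<mu> \<sigma> :: "'v set set"
    and pref :: "'v \<Rightarrow> 'v set \<Rightarrow> 'v set \<Rightarrow> bool"
    and k :: nat and vs :: "nat \<Rightarrow> 'v"
  assumes "setting V1 V2 E E1 E2 pref"
    and "nu_stable E E1 E2 pref \<mu>" and "nu_stable E E1 E2 pref \<sigma>"
    and "F = (\<mu> - \<sigma>) \<union> (\<sigma> - \<mu>)"
    and "inj_on vs {1..k}" and "vs (k + 1) = vs 1"
    and "\<forall>l \<in> {1..k}. {vs l, vs (l + 1)} \<in> F"
    and "e = (\<lambda>l. if l = 0 then {vs k, vs (k + 1)} else {vs l, vs (l + 1)})"
  shows "(\<forall>l \<in> {1..k}. strict_pref pref (vs l) (e l) (e (l - 1))) \<or>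
         (\<forall>l \<in> {1..k}. strict_pref pref (vs l) (e (l - 1)) (e l)) \<or>
         (\<forall>l \<in> {1..k}. indiff pref (vs l) (e l) (e (l - 1)))"
proof -
  have "F \<subseteq> E"
    using assms(2-4) unfolding nu_stable_def matching_def by blast
  then have inE: "\<forall>l \<in> {1..k}. {vs l, vs (l + 1)} \<in> E"
    using assms(7) by blast
  consider "k \<le> 2" | "3 \<le> k"
    by linarith
  then show ?thesis
  proof cases
    case 1
    then show ?thesis
      using short_cycle_indiff[OF assms(1,6) inE assms(8)] by blast
  next
    case 2
    let ?S = "\<lambda>l. strict_pref pref (vs l) (e l) (e (l - 1))"
    let ?T = "\<lambda>l. strict_pref pref (vs l) (e (l - 1)) (e l)"
    note transfer = cycle_strict_pref_transfer[OF assms 2 _ refl]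
    have "(\<forall>l \<in> {1..k}. ?S l) \<or> (\<forall>l \<in> {1..k}. \<not> ?S l)"
      using cyclic_all_or_none[of k ?S, OF transfer(1)] .
    moreover have "(\<forall>l \<in> {1..k}. \<not> ?T l) \<or> (\<forall>l \<in> {1..k}. ?T l)"
      using cyclic_all_or_none[of k "\<lambda>l. \<not> ?T l"] transfer(2) by blast
    ultimately show ?thesis
      using cycle_pref_total[OF assms(1,6) inE assms(8)]
      unfolding strict_pref_def indiff_def by blast
  qed
qed

end
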